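(* Let $h\in\mathbb{Q}[x]$ be a nonzero $t$-sparse polynomial with nonzero constant term, written $h=a_1+a_2x^{d_2}+\cdots+a_tx^{d_t}$ with $0<d_2<\cdots<d_t$. Suppose the complete factorization of $h$ over $\mathbb{Q}[x]$ is $h=a_th_1^{e_1}\cdots h_k^{e_k}$, with each $h_i$ monic and irreducible and the $h_i$ distinct. Then $\max_i e_i\le t-1$.
   Context: A polynomial is $t$-sparse if it has at most $t$ nonzero coefficients in the power basis. *)

theory Defs
  imports "HOL-Computational_Algebra.Computational_Algebra"
begin

definition sparse :: "nat \<Rightarrow> 'a::zero poly \<Rightarrow> bool" where
  "sparse t p \<longleftrightarrow> card {i. coeff p i \<noteq> 0} \<le> t"

end

theory Submission
  imports Defs
begin

text \<open>
  Let \<open>p\<close> be a non-unit with \<open>p\<^sup>e\<close> dividing \<open>h\<close>, and let \<open>0 < d\<^sub>2 < \<dots> < d\<^sub>t\<close> be the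
  nonzero exponents of \<open>h\<close>. The operator \<open>x\<cdot>D - d\<close> multiplies \<open>x\<^sup>n\<close> by \<open>n - d\<close>, so
  the composition of \<open>x\<cdot>D - d\<^sub>j\<close> for \<open>j = 2, \<dots>, t\<close> sends \<open>h\<close> to a nonzero constant
  (in characteristic 0). Each such operator lowers the multiplicity of \<open>p\<close> by at most
  one, so if \<open>e \<ge> t\<close> then \<open>p\<close> still divides that constant, which is absurd.
\<close>

definition euler_shift :: "nat \<Rightarrow> 'a::idom poly \<Rightarrow> 'a poly" where
  "euler_shift d f = pCons 0 (pderiv f) - smult (of_nat d) f"

definition euler_shifts :: "nat list \<Rightarrow> 'a::idom poly \<Rightarrow> 'a poly" where
  "euler_shifts ds f = foldr euler_shift ds f"

lemma coeff_euler_shift: "coeff (euler_shift d f) n = (of_nat n - of_nat d) * coeff f n"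
proof -
  have "coeff (pCons 0 (pderiv f)) n = of_nat n * coeff f n"
    by (cases n) (simp_all add: coeff_pderiv)
  then show ?thesis
    by (simp add: euler_shift_def algebra_simps)
qed

lemma coeff_euler_shifts:
  "coeff (euler_shifts ds f) n = (\<Prod>d\<leftarrow>ds. of_nat n - of_nat d) * coeff f n"
  by (induction ds) (simp_all add: euler_shifts_def coeff_euler_shift)

lemma power_Suc_dvd_imp_dvd_euler_shift:
  fixes p f :: "'a::idom poly"
  assumes "p ^ Suc m dvd f"
  shows "p ^ m dvd euler_shift d f"
proof -
  obtain g where g: "f = p ^ Suc m * g"
    using assms by blast
  have pm_dvd: "p ^ m dvd p ^ Suc m"
    by (simp add: le_imp_power_dvd)
  have "p ^ m dvd pderiv (p ^ Suc m)"
    unfolding pderiv_power_Suc by (simp add: dvd_smult)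
  with pm_dvd have "p ^ m dvd pderiv f"
    by (simp add: g pderiv_mult)
  then have "p ^ m dvd [:0, 1:] * pderiv f"
    by (rule dvd_mult)
  moreover have "p ^ m dvd smult (of_nat d) f"
    using pm_dvd by (simp add: g dvd_smult)
  ultimately show ?thesis
    by (simp add: euler_shift_def dvd_diff)
qed

lemma power_dvd_euler_shifts:
  fixes p f :: "'a::idom poly"
  shows "p ^ (m + length ds) dvd f \<Longrightarrow> p ^ m dvd euler_shifts ds f"
proof (induction ds arbitrary: m)
  case Nil
  then show ?case
    by (simp add: euler_shifts_def)
next
  case (Cons d ds)
  then have "p ^ (Suc m + length ds) dvd f"
    by simp
  then have "p ^ Suc m dvd euler_shifts ds f"
    by (rule Cons.IH)
  then show ?case
    by (simp add: euler_shifts_def power_Suc_dvd_imp_dvd_euler_shift)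
qed

lemma euler_shifts_nonzero_exponents:
  fixes f :: "'a::idom poly"
  assumes set_ds: "set ds = {n. n \<noteq> 0 \<and> coeff f n \<noteq> 0}"
  shows "euler_shifts ds f = [:(\<Prod>d\<leftarrow>ds. - of_nat d) * coeff f 0:]"
proof (rule poly_eqI)
  fix n
  consider "n = 0" | "n \<in> set ds" | "n \<noteq> 0" "coeff f n = 0"
    using set_ds by blast
  then show "coeff (euler_shifts ds f) n = coeff [:(\<Prod>d\<leftarrow>ds. - of_nat d) * coeff f 0:] n"
  proof cases
    case 1
    then show ?thesis
      by (simp add: coeff_euler_shifts)
  next
    case 2
    then have "(\<Prod>d\<leftarrow>ds. of_nat n - of_nat d :: 'a) = 0"
      by (force simp: prod_list_zero_iff)
    moreover have "n \<noteq> 0"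
      using 2 set_ds by blast
    ultimately show ?thesis
      by (simp add: coeff_euler_shifts coeff_pCons split: nat.split)
  next
    case 3
    then show ?thesis
      by (simp add: coeff_euler_shifts coeff_pCons split: nat.split)
  qed
qed

lemma power_dvd_sparse_poly_less:
  fixes f p :: "'a::field_char_0 poly"
  assumes "sparse t f" and "coeff f 0 \<noteq> 0"
    and "\<not> is_unit p" and "p ^ e dvd f"
  shows "e < t"
proof (rule ccontr)
  assume "\<not> e < t"
  define S where "S = {n. coeff f n \<noteq> 0}"
  define ds where "ds = sorted_list_of_set (S - {0})"
  have "finite S"
    unfolding S_def by (rule finite_subset[of _ "{..degree f}"]) (auto intro: le_degree)
  moreover have "0 \<in> S"
    using assms(2) by (simp add: S_def)
  ultimately have "card S > 0"
    by (auto simp: card_gt_0_iff)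
  then have "length ds + 1 = card S"
    using \<open>finite S\<close> \<open>0 \<in> S\<close> by (simp add: ds_def card_Diff_singleton)
  moreover have "card S \<le> t"
    using assms(1) by (simp add: sparse_def S_def)
  ultimately have "1 + length ds \<le> e"
    using \<open>\<not> e < t\<close> by linarith
  then have "p ^ (1 + length ds) dvd f"
    using assms(4) le_imp_power_dvd dvd_trans by blast
  then have "p dvd euler_shifts ds f"
    using power_dvd_euler_shifts[of p 1 ds f] by simp
  also have set_ds: "set ds = {n. n \<noteq> 0 \<and> coeff f n \<noteq> 0}"
    using \<open>finite S\<close> by (auto simp: ds_def S_def)
  then have "euler_shifts ds f = [:(\<Prod>d\<leftarrow>ds. - of_nat d) * coeff f 0:]"
    by (rule euler_shifts_nonzero_exponents)
  finally have "p dvd [:(\<Prod>d\<leftarrow>ds. - of_nat d) * coeff f 0:]" .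
  moreover have "(\<Prod>d\<leftarrow>ds. - of_nat d :: 'a) \<noteq> 0"
  proof -
    have "0 \<notin> set ds"
      using set_ds by blast
    then show ?thesis
      by (auto simp: prod_list_zero_iff)
  qed
  then have "is_unit [:(\<Prod>d\<leftarrow>ds. - of_nat d) * coeff f 0:]"
    using assms(2) by (simp add: is_unit_const_poly_iff dvd_field_iff)
  ultimately show False
    using assms(3) dvd_unit_imp_unit by blast
qed

theorem lemma4p1:
  fixes h :: "rat poly" and t k :: nat
    and hs :: "nat \<Rightarrow> rat poly" and es :: "nat \<Rightarrow> nat"
  assumes "h \<noteq> 0"
    and "sparse t h"
    and "coeff h 0 \<noteq> 0"
    and "h = smult (lead_coeff h) (\<Prod>i<k. hs i ^ es i)"
    and "inj_on hs {..<k}"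
    and "\<And>i. i < k \<Longrightarrow> lead_coeff (hs i) = 1 \<and> irreducible (hs i) \<and> es i \<ge> 1"
  shows "\<forall>i<k. es i \<le> t - 1"
proof (intro allI impI)
  fix i
  assume "i < k"
  then have "hs i ^ es i dvd (\<Prod>i<k. hs i ^ es i)"
    by (intro dvd_prodI) auto
  then have "hs i ^ es i dvd h"
    using assms(4) by (metis dvd_smult)
  moreover have "\<not> is_unit (hs i)"
    using assms(6)[OF \<open>i < k\<close>] by (simp add: irreducible_def)
  ultimately have "es i < t"
    using assms(2,3) power_dvd_sparse_poly_less by blast
  then show "es i \<le> t - 1"
    by simp
qed

end
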